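(* Let $Z$ be a $d\times d$ complex matrix which is not normal, i.e. $[Z,Z^\dagger]\neq 0$. Define the $2d\times 2d$ matrix $$Q(Z)=\begin{pmatrix}\mathbb 1 & Z\\ Z^\dagger & Z^\dagger Z\end{pmatrix},$$ viewed as an operator on $\mathbb C^d\otimes\mathbb C^2$. Then $Q(Z)$ is positive semidefinite and (after normalization) is an entangled, i.e. non-separable, state on $\mathbb C^d\otimes\mathbb C^2$.
   Context: A positive semidefinite operator on a bipartite space is separable if it is a nonnegative combination of tensor products of positive semidefinite operators; otherwise it is entangled. *)

theory Defs
  imports "HOL-Analysis.Analysis"
begin

text \<open>Complex square matrices are elements of complex^'n^'n (rows indexed by 'n).
  The space C^d is indexed by a finite type 'd, C^2 by bool, so C^d (x) C^2 is
  indexed by 'd \<times> bool.\<close>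

definition adj :: "complex^'n^'m \<Rightarrow> complex^'m^'n" where
  "adj A = (\<chi> i j. cnj (A $ j $ i))"

definition normal_mat :: "complex^'n^'n \<Rightarrow> bool" where
  "normal_mat A \<longleftrightarrow> A ** adj A = adj A ** A"

definition psd :: "complex^'n^'n \<Rightarrow> bool" where
  "psd M \<longleftrightarrow> (\<forall>x::complex^'n.
      (\<Sum>i\<in>UNIV. \<Sum>j\<in>UNIV. cnj (x $ i) * M $ i $ j * x $ j) \<in> \<real> \<and>
      0 \<le> Re (\<Sum>i\<in>UNIV. \<Sum>j\<in>UNIV. cnj (x $ i) * M $ i $ j * x $ j))"

definition tensor :: "complex^'a^'a \<Rightarrow> complex^'b^'b \<Rightarrow> complex^('a::finite \<times> 'b::finite)^('a \<times> 'b)" where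
  "tensor A B = (\<chi> p q. A $ fst p $ fst q * B $ snd p $ snd q)"

definition separable :: "complex^('a::finite \<times> 'b::finite)^('a \<times> 'b) \<Rightarrow> bool" where
  "separable M \<longleftrightarrow> psd M \<and>
     (\<exists>(n::nat) (c::nat \<Rightarrow> real) (A::nat \<Rightarrow> complex^'a^'a) (B::nat \<Rightarrow> complex^'b^'b).
        (\<forall>k<n. 0 \<le> c k \<and> psd (A k) \<and> psd (B k)) \<and>
        M = (\<Sum>k<n. c k *\<^sub>R tensor (A k) (B k)))"

definition entangled :: "complex^('a::finite \<times> 'b::finite)^('a \<times> 'b) \<Rightarrow> bool" where
  "entangled M \<longleftrightarrow> psd M \<and> \<not> separable M"

text \<open>Q(Z) = [[1, Z], [Z^dagger, Z^dagger Z]] in 2x2 block form; the block index is the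
  bool component (False = first block), the index inside a block is the 'd component.\<close>
definition Qmat :: "complex^'d^'d \<Rightarrow> complex^('d \<times> bool)^('d \<times> bool)" where
  "Qmat Z = (\<chi> p q.
     (if \<not> snd p \<and> \<not> snd q then mat 1
      else if \<not> snd p \<and> snd q then Z
      else if snd p \<and> \<not> snd q then adj Z
      else adj Z ** Z) $ fst p $ fst q)"

definition normalize_state :: "complex^'n^'n \<Rightarrow> complex^'n^'n" where
  "normalize_state M = (\<chi> i j. M $ i $ j / trace M)"

end

theory Submission
  imports Defs
begin

text \<open>
  Q(Z) = W* W for W = (1 Z), so it is positive semidefinite. Its partial transpose on the
  qubit factor is [[1, Z*], [Z, Z* Z]], whose quadratic form at (-Z* v, v) equals
  <v, (Z* Z - Z Z*) v>. The commutator Z* Z - Z Z* is Hermitian, traceless and nonzero when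
  Z is not normal, so some v makes this negative. On the other hand, the partial transpose
  of a separable operator has a nonnegative quadratic form (Peres' criterion): for A \<otimes> B
  it equals tr(G B) with G a Gram matrix of A, and tr(G B) \<ge> 0 for positive semidefinite
  2 \<times> 2 matrices G and B.
\<close>

definition cinner :: "complex^'n \<Rightarrow> complex^'n \<Rightarrow> complex" where
  "cinner x y = (\<Sum>i\<in>UNIV. cnj (x $ i) * y $ i)"

definition quad_form :: "complex^'n^'n \<Rightarrow> complex^'n \<Rightarrow> complex" where
  "quad_form M x = (\<Sum>i\<in>UNIV. \<Sum>j\<in>UNIV. cnj (x $ i) * M $ i $ j * x $ j)"

lemma psd_iff_quad_form: "psd M \<longleftrightarrow> (\<forall>x. quad_form M x \<in> \<real> \<and> 0 \<le> Re (quad_form M x))"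
  by (simp add: psd_def quad_form_def)

lemma quad_form_eq_cinner: "quad_form M x = cinner x (M *v x)"
  by (simp add: quad_form_def cinner_def matrix_vector_mult_def sum_distrib_left mult.assoc)

lemma cinner_adj: "cinner x (A *v y) = cinner (adj A *v x) y"
proof -
  have "cinner x (A *v y) = (\<Sum>i\<in>UNIV. \<Sum>j\<in>UNIV. cnj (x $ i) * A $ i $ j * y $ j)"
    by (simp add: cinner_def matrix_vector_mult_def sum_distrib_left mult.assoc)
  also have "\<dots> = (\<Sum>j\<in>UNIV. \<Sum>i\<in>UNIV. cnj (x $ i) * A $ i $ j * y $ j)"
    by (rule sum.swap)
  also have "\<dots> = cinner (adj A *v x) y"
    by (simp add: cinner_def matrix_vector_mult_def adj_def sum_distrib_right sum_distrib_left mult_ac)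
  finally show ?thesis .
qed

lemma cinner_add_left: "cinner (x + y) z = cinner x z + cinner y z"
  by (simp add: cinner_def sum.distrib algebra_simps)

lemma cinner_add_right: "cinner x (y + z) = cinner x y + cinner x z"
  by (simp add: cinner_def sum.distrib algebra_simps)

lemma cinner_zero_right: "cinner x 0 = 0"
  by (simp add: cinner_def)

lemma cinner_self_nonneg: "cinner x x \<in> \<real> \<and> 0 \<le> Re (cinner x x)"
proof -
  have "cinner x x = of_real (\<Sum>i\<in>UNIV. (Re (x $ i))\<^sup>2 + (Im (x $ i))\<^sup>2)"
    by (simp add: cinner_def complex_mult_cnj mult.commute)
  then show ?thesis
    by (simp add: sum_nonneg)
qed

lemma cinner_axis_left: "cinner (axis i a) y = cnj a * y $ i"
proof -
  have "cinner (axis i a) y = (\<Sum>k\<in>UNIV. if k = i then cnj a * y $ k else 0)"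
    unfolding cinner_def by (rule sum.cong) (auto simp: axis_def)
  then show ?thesis
    by simp
qed

lemma matrix_vector_mult_axis: "(H *v axis j b) $ i = H $ i $ j * b"
proof -
  have "(H *v axis j b) $ i = (\<Sum>k\<in>UNIV. if k = j then H $ i $ j * b else 0)"
    unfolding matrix_vector_mult_def
    by (simp only: vec_lambda_beta, rule sum.cong) (auto simp: axis_def)
  then show ?thesis
    by simp
qed

lemma adj_adj [simp]: "adj (adj A) = A"
  by (simp add: adj_def vec_eq_iff)

lemma adj_matrix_mult: "adj (A ** B) = adj B ** adj A"
  by (simp add: adj_def matrix_matrix_mult_def vec_eq_iff mult.commute)

lemma adj_diff: "adj (A - B) = adj A - adj B"
  by (simp add: adj_def vec_eq_iff)

lemma hermitian_nonneg_trace_zero: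
  fixes H :: "complex^'n^'n"
  assumes herm: "adj H = H" and trace: "trace H = 0"
    and nonneg: "\<And>v. 0 \<le> Re (cinner v (H *v v))"
  shows "H = 0"
proof -
  have conj_entry: "H $ j $ i = cnj (H $ i $ j)" for i j
    using arg_cong[where f = "\<lambda>M. M $ i $ j", OF herm]
    by (simp add: adj_def) (metis complex_cnj_cnj)
  have "0 \<le> Re (H $ i $ i)" for i
    using nonneg[of "axis i 1"] by (simp add: cinner_axis_left matrix_vector_mult_axis)
  moreover have "(\<Sum>i\<in>UNIV. Re (H $ i $ i)) = 0"
    using trace by (simp add: trace_def flip: Re_sum)
  ultimately have "Re (H $ i $ i) = 0" for i
    by (simp add: sum_nonneg_eq_0_iff)
  then have diag: "H $ i $ i = 0" for i
    using conj_entry[of i i] by (simp add: complex_eq_iff)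
  have "H $ i $ j = 0" for i j
  proof (cases "i = j")
    case False
    define g where "g = H $ i $ j"
    \<comment> \<open>The vector e_i - conj(g) e_j makes the quadratic form equal to -2|g|^2.\<close>
    define v where "v = axis i 1 + axis j (- cnj g)"
    have "cinner v (H *v v) = H $ i $ i - H $ i $ j * cnj g - g * H $ j $ i + g * H $ j $ j * cnj g"
      by (simp add: v_def matrix_vector_right_distrib cinner_add_left cinner_add_right
          cinner_axis_left matrix_vector_mult_axis algebra_simps)
    also have "\<dots> = - 2 * (g * cnj g)"
      using diag conj_entry[of j i] by (simp add: g_def)
    finally have "(Re g)\<^sup>2 + (Im g)\<^sup>2 \<le> 0"
      using nonneg[of v] by (simp add: complex_mult_cnj)
    then show ?thesis
      by (simp add: g_def complex_eq_iff sum_power2_le_zero_iff)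
  qed (use diag in simp)
  then show ?thesis
    by (simp add: vec_eq_iff)
qed

lemma not_normal_imp_commutator_negative:
  assumes "\<not> normal_mat Z"
  obtains v where "Re (cinner v ((adj Z ** Z - Z ** adj Z) *v v)) < 0"
proof -
  have "adj Z ** Z - Z ** adj Z \<noteq> 0"
    using assms by (simp add: normal_mat_def)
  moreover have "adj (adj Z ** Z - Z ** adj Z) = adj Z ** Z - Z ** adj Z"
    by (simp add: adj_diff adj_matrix_mult)
  moreover have "trace (adj Z ** Z - Z ** adj Z) = 0"
    by (simp add: trace_sub trace_mul_sym[of Z])
  ultimately show ?thesis
    using hermitian_nonneg_trace_zero that by (meson not_le)
qed

lemma sum_UNIV_prod: "(\<Sum>p\<in>UNIV. f p) = (\<Sum>b\<in>UNIV. \<Sum>a\<in>UNIV. f (a, b))"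
  by (subst sum.swap) (simp add: sum.cartesian_product flip: UNIV_Times_UNIV)

lemma sum_swap_pairs:
  "(\<Sum>a\<in>A. \<Sum>b\<in>B. \<Sum>c\<in>C. \<Sum>d\<in>D. f a b c d) = (\<Sum>c\<in>C. \<Sum>d\<in>D. \<Sum>a\<in>A. \<Sum>b\<in>B. f a b c d)"
proof -
  have "(\<Sum>a\<in>A. \<Sum>b\<in>B. \<Sum>c\<in>C. \<Sum>d\<in>D. f a b c d) =
      (\<Sum>p\<in>A \<times> B. \<Sum>q\<in>C \<times> D. f (fst p) (snd p) (fst q) (snd q))"
    by (simp only: sum.cartesian_product' fst_conv snd_conv)
  also have "\<dots> = (\<Sum>q\<in>C \<times> D. \<Sum>p\<in>A \<times> B. f (fst p) (snd p) (fst q) (snd q))"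
    by (rule sum.swap)
  also have "\<dots> = (\<Sum>c\<in>C. \<Sum>d\<in>D. \<Sum>a\<in>A. \<Sum>b\<in>B. f a b c d)"
    by (simp only: sum.cartesian_product' fst_conv snd_conv)
  finally show ?thesis .
qed

definition slice :: "complex^('a::finite \<times> 'b::finite) \<Rightarrow> 'b \<Rightarrow> complex^'a" where
  "slice x b = (\<chi> a. x $ (a, b))"

lemma sum_prod_bool:
  "(\<Sum>p\<in>UNIV. f p) = (\<Sum>a\<in>UNIV. f (a, False)) + (\<Sum>a\<in>UNIV. f (a, True))"
  for f :: "'a::finite \<times> bool \<Rightarrow> 'c::comm_monoid_add"
  by (simp add: sum_UNIV_prod UNIV_bool)

lemma cinner_slices:
  "cinner x y = cinner (slice x False) (slice y False) + cinner (slice x True) (slice y True)"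
  by (simp add: cinner_def sum_prod_bool slice_def)

lemma slice_Qmat_mult_vec:
  "slice (Qmat Z *v x) False = slice x False + Z *v slice x True"
  "slice (Qmat Z *v x) True = adj Z *v slice x False + (adj Z ** Z) *v slice x True"
  by (simp_all add: vec_eq_iff slice_def Qmat_def matrix_vector_mult_def sum_prod_bool
      mat_def if_distrib sum.If_cases algebra_simps)

lemma psd_Qmat: "psd (Qmat Z)"
  unfolding psd_iff_quad_form
proof
  fix x
  define w where "w = slice x False + Z *v slice x True"
  have "quad_form (Qmat Z) x = cinner (slice x False) w + cinner (slice x True) (adj Z *v w)"
    by (simp add: quad_form_eq_cinner cinner_slices slice_Qmat_mult_vec w_def
        matrix_vector_mul_assoc[symmetric] matrix_vector_right_distrib)
  also have "\<dots> = cinner w w"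
    by (simp add: cinner_adj w_def cinner_add_left)
  finally show "quad_form (Qmat Z) x \<in> \<real> \<and> 0 \<le> Re (quad_form (Qmat Z) x)"
    using cinner_self_nonneg by simp
qed

definition partial_transpose ::
    "complex^('a::finite \<times> 'b::finite)^('a \<times> 'b) \<Rightarrow> complex^('a \<times> 'b)^('a \<times> 'b)" where
  "partial_transpose M = (\<chi> p q. M $ (fst p, snd q) $ (fst q, snd p))"

lemma slice_partial_transpose_Qmat_mult_vec:
  "slice (partial_transpose (Qmat Z) *v x) False = slice x False + adj Z *v slice x True"
  "slice (partial_transpose (Qmat Z) *v x) True = Z *v slice x False + (adj Z ** Z) *v slice x True"
  by (simp_all add: vec_eq_iff slice_def partial_transpose_def Qmat_def matrix_vector_mult_def
      sum_prod_bool mat_def if_distrib sum.If_cases algebra_simps)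

lemma quad_form_partial_transpose_Qmat:
  fixes Z :: "complex^'d^'d" and v :: "complex^'d"
  defines "x \<equiv> \<chi> p. if snd p then v $ fst p else - (adj Z *v v) $ fst p"
  shows "quad_form (partial_transpose (Qmat Z)) x = cinner v ((adj Z ** Z - Z ** adj Z) *v v)"
proof -
  have "slice x False = - (adj Z *v v)" "slice x True = v"
    by (simp_all add: x_def slice_def vec_eq_iff)
  then show ?thesis
    by (simp add: quad_form_eq_cinner cinner_slices slice_partial_transpose_Qmat_mult_vec
        cinner_zero_right matrix_vector_mult_diff_rdistrib matrix_vector_mul_assoc
        matrix_vector_mult_diff_distrib[of Z 0, simplified])
qed

definition gram :: "complex^'a^'a \<Rightarrow> complex^('a::finite \<times> 'b::finite) \<Rightarrow> complex^'b^'b" where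
  "gram A x = (\<chi> b b'. cinner (slice x b) (A *v slice x b'))"

lemma quad_form_partial_transpose_tensor:
  "quad_form (partial_transpose (tensor A B)) x = trace (gram A x ** B)"
proof -
  have "quad_form (partial_transpose (tensor A B)) x =
      (\<Sum>b\<in>UNIV. \<Sum>a\<in>UNIV. \<Sum>b'\<in>UNIV. \<Sum>a'\<in>UNIV.
        cnj (x $ (a, b)) * A $ a $ a' * x $ (a', b') * B $ b' $ b)"
    by (simp add: quad_form_def partial_transpose_def tensor_def sum_UNIV_prod mult_ac)
  also have "\<dots> = (\<Sum>b\<in>UNIV. \<Sum>b'\<in>UNIV. \<Sum>a\<in>UNIV. \<Sum>a'\<in>UNIV.
      cnj (x $ (a, b)) * A $ a $ a' * x $ (a', b') * B $ b' $ b)"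
    by (rule sum.cong[OF refl], rule sum.swap)
  also have "\<dots> = trace (gram A x ** B)"
    by (simp add: trace_def matrix_matrix_mult_def gram_def cinner_def slice_def matrix_vector_mult_def
        sum_distrib_left sum_distrib_right mult_ac)
  finally show ?thesis .
qed

lemma quad_form_gram: "quad_form (gram A x) s = quad_form A (\<chi> a. \<Sum>b\<in>UNIV. s $ b * x $ (a, b))"
proof -
  have "quad_form (gram A x) s =
      (\<Sum>b\<in>UNIV. \<Sum>b'\<in>UNIV. \<Sum>a\<in>UNIV. \<Sum>a'\<in>UNIV.
        cnj (s $ b * x $ (a, b)) * A $ a $ a' * (s $ b' * x $ (a', b')))"
    by (simp add: quad_form_def gram_def cinner_def slice_def matrix_vector_mult_def
        sum_distrib_left sum_distrib_right mult_ac)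
  also have "\<dots> = (\<Sum>a\<in>UNIV. \<Sum>a'\<in>UNIV. \<Sum>b\<in>UNIV. \<Sum>b'\<in>UNIV.
      cnj (s $ b * x $ (a, b)) * A $ a $ a' * (s $ b' * x $ (a', b')))"
    by (rule sum_swap_pairs)
  also have "\<dots> = quad_form A (\<chi> a. \<Sum>b\<in>UNIV. s $ b * x $ (a, b))"
    by (simp add: quad_form_def sum_distrib_left sum_distrib_right mult_ac)
  finally show ?thesis .
qed

lemma psd_gram: "psd A \<Longrightarrow> psd (gram A x)"
  by (simp add: psd_iff_quad_form quad_form_gram)

lemma quad_form_bool:
  fixes B :: "complex^bool^bool"
  shows "quad_form B (\<chi> b. if b then t else s) =
    cnj s * s * B $ False $ False + cnj s * t * B $ False $ True +
    cnj t * s * B $ True $ False + cnj t * t * B $ True $ True"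
  by (simp add: quad_form_def UNIV_bool algebra_simps)

lemma psd_bool_entries:
  fixes B :: "complex^bool^bool"
  assumes "psd B"
  defines "a \<equiv> B $ False $ False" and "c \<equiv> B $ True $ True" and "g \<equiv> B $ False $ True"
  shows "Im a = 0" "Im c = 0" "0 \<le> Re a" "0 \<le> Re c"
    "B $ True $ False = cnj g" "(cmod g)\<^sup>2 \<le> Re a * Re c"
proof -
  let ?h = "B $ True $ False"
  define V where "V s t = cnj s * s * a + cnj s * t * g + cnj t * s * ?h + cnj t * t * c" for s t
  have V: "V s t \<in> \<real> \<and> 0 \<le> Re (V s t)" for s t
    using assms(1) quad_form_bool[of B t s] unfolding psd_iff_quad_form V_def a_def c_def g_def
    by metis
  show "Im a = 0" "0 \<le> Re a"
    using V[of 1 0] by (simp_all add: V_def complex_is_Real_iff)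
  show "Im c = 0" "0 \<le> Re c"
    using V[of 0 1] by (simp_all add: V_def complex_is_Real_iff)
  have "Im g + Im ?h = 0" "Re g - Re ?h = 0"
    using V[of 1 1] V[of 1 \<i>] \<open>Im a = 0\<close> \<open>Im c = 0\<close> by (simp_all add: V_def complex_is_Real_iff)
  then show h: "?h = cnj g"
    by (simp add: complex_eq_iff)
  obtain ra rc where a: "a = of_real ra" and c: "c = of_real rc"
    using \<open>Im a = 0\<close> \<open>Im c = 0\<close> by (metis complex_eq_iff Im_complex_of_real Re_complex_of_real)
  define n where "n = (cmod g)\<^sup>2"
  have g_cnj: "g * cnj g = of_real n"
    unfolding n_def by (rule complex_norm_square[symmetric])
  have "n \<le> ra * rc"
  proof (cases "ra = 0")
    case False
    have "V (- g) a = of_real (ra * (ra * rc - n))"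
      by (simp add: V_def a c h algebra_simps flip: g_cnj)
    then show ?thesis
      using V[of "- g" a] False \<open>0 \<le> Re a\<close> a by (simp add: zero_le_mult_iff)
  next
    case True
    have "V (- (c + 1) * g) (of_real n) = - of_real ((rc + 2) * n\<^sup>2)"
      by (simp add: V_def a c h True power2_eq_square algebra_simps flip: g_cnj)
    then have "(rc + 2) * n\<^sup>2 \<le> 0"
      using V[of "- (c + 1) * g" "of_real n"] by simp
    then have "n = 0"
      using \<open>0 \<le> Re c\<close> c by (simp add: mult_le_0_iff)
    then show ?thesis
      using True by simp
  qed
  then show "(cmod g)\<^sup>2 \<le> Re a * Re c"
    by (simp add: n_def a c)
qed

lemma psd_bool_trace_mult_nonneg:
  fixes P G :: "complex^bool^bool"
  assumes "psd P" and "psd G"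
  shows "0 \<le> Re (trace (P ** G))"
proof -
  let ?p = "Re (P $ False $ False)" and ?r = "Re (P $ True $ True)" and ?q = "P $ False $ True"
  let ?a = "Re (G $ False $ False)" and ?c = "Re (G $ True $ True)" and ?g = "G $ False $ True"
  note P = psd_bool_entries[OF assms(1)] and G = psd_bool_entries[OF assms(2)]
  have trace: "Re (trace (P ** G)) = ?p * ?a + ?r * ?c + 2 * Re (cnj ?q * ?g)"
    using P(1,2) G(1,2) by (simp add: trace_def matrix_matrix_mult_def UNIV_bool P(5) G(5))
  have "(cmod ?q * cmod ?g)\<^sup>2 \<le> (?p * ?r) * (?a * ?c)"
    unfolding power_mult_distrib using P(3,4,6) G(3,4,6) by (intro mult_mono) auto
  also have "\<dots> = (?p * ?a) * (?r * ?c)"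
    by (simp add: mult_ac)
  finally have "cmod ?q * cmod ?g \<le> sqrt ((?p * ?a) * (?r * ?c))"
    using real_sqrt_le_mono by fastforce
  also have "\<dots> \<le> (?p * ?a + ?r * ?c) / 2"
    using P(3,4) G(3,4) by (intro arith_geo_mean_sqrt) auto
  finally have "cmod ?q * cmod ?g \<le> (?p * ?a + ?r * ?c) / 2" .
  moreover have "- Re (cnj ?q * ?g) \<le> cmod ?q * cmod ?g"
    using abs_Re_le_cmod[of "cnj ?q * ?g"] by (simp add: norm_mult)
  ultimately show ?thesis
    unfolding trace by argo
qed

lemma partial_transpose_sum: "partial_transpose (sum M K) = (\<Sum>k\<in>K. partial_transpose (M k))"
  by (simp add: partial_transpose_def vec_eq_iff sum_component)

lemma partial_transpose_scaleR: "partial_transpose (c *\<^sub>R M) = c *\<^sub>R partial_transpose M"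
  by (simp add: partial_transpose_def vec_eq_iff)

lemma scaleR_matrix_component: "(c *\<^sub>R M) $ i $ j = of_real c * M $ i $ j"
  by (simp only: vector_scaleR_component) (simp add: scaleR_conv_of_real)

lemma quad_form_zero: "quad_form 0 x = 0"
  by (simp add: quad_form_def)

lemma quad_form_add: "quad_form (M + N) x = quad_form M x + quad_form N x"
  by (simp add: quad_form_def sum.distrib algebra_simps)

lemma quad_form_sum: "quad_form (sum M K) x = (\<Sum>k\<in>K. quad_form (M k) x)"
  by (induction K rule: infinite_finite_induct) (simp_all add: quad_form_add quad_form_zero)

lemma quad_form_scaleR: "quad_form (c *\<^sub>R M) x = of_real c * quad_form M x"
  by (simp add: quad_form_def sum_distrib_left scaleR_matrix_component mult_ac
      del: vector_scaleR_component)

lemma psd_scaleR: "0 \<le> c \<Longrightarrow> psd M \<Longrightarrow> psd (c *\<^sub>R M)"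
  by (simp add: psd_iff_quad_form quad_form_scaleR)

lemma separable_imp_partial_transpose_nonneg:
  fixes M :: "complex^('a::finite \<times> bool)^('a \<times> bool)"
  assumes "separable M"
  shows "0 \<le> Re (quad_form (partial_transpose M) x)"
proof -
  obtain n c and A :: "nat \<Rightarrow> complex^'a^'a" and B :: "nat \<Rightarrow> complex^bool^bool"
    where factors: "\<forall>k<n. 0 \<le> c k \<and> psd (A k) \<and> psd (B k)"
      and M: "M = (\<Sum>k<n. c k *\<^sub>R tensor (A k) (B k))"
    using assms unfolding separable_def by blast
  have "Re (quad_form (partial_transpose M) x) = (\<Sum>k<n. c k * Re (trace (gram (A k) x ** B k)))"
    by (simp add: M partial_transpose_sum partial_transpose_scaleR quad_form_sum quad_form_scaleR
        quad_form_partial_transpose_tensor Re_sum)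
  also have "\<dots> \<ge> 0"
    using factors by (intro sum_nonneg mult_nonneg_nonneg psd_bool_trace_mult_nonneg psd_gram) auto
  finally show ?thesis .
qed

lemma entangled_if_partial_transpose_negative:
  fixes M :: "complex^('a::finite \<times> bool)^('a \<times> bool)"
  assumes "psd M" and "Re (quad_form (partial_transpose M) x) < 0"
  shows "entangled M"
  using assms separable_imp_partial_transpose_nonneg[of M x] unfolding entangled_def by linarith

lemma normalize_state_eq_scaleR: "trace M = of_real r \<Longrightarrow> normalize_state M = (1 / r) *\<^sub>R M"
  by (simp add: normalize_state_def vec_eq_iff scaleR_matrix_component divide_inverse
      of_real_inverse mult.commute del: vector_scaleR_component)

lemma trace_adj_mult_self:
  "trace (adj Z ** Z) = of_real (\<Sum>i\<in>UNIV. \<Sum>k\<in>UNIV. (cmod (Z $ k $ i))\<^sup>2)"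
  by (simp add: trace_def matrix_matrix_mult_def adj_def of_real_sum mult.commute[of "cnj _"]
      complex_norm_square del: of_real_power)

lemma trace_Qmat: "trace (Qmat Z) = of_nat CARD('d) + trace (adj Z ** Z)"
  for Z :: "complex^'d^'d"
  by (simp add: trace_def sum_prod_bool Qmat_def mat_def)

lemma trace_Qmat_positive:
  fixes Z :: "complex^'d^'d"
  obtains r where "trace (Qmat Z) = of_real r" and "0 < r"
proof
  show "trace (Qmat Z) = of_real (CARD('d) + (\<Sum>i\<in>UNIV. \<Sum>k\<in>UNIV. (cmod (Z $ k $ i))\<^sup>2))"
    by (simp add: trace_Qmat trace_adj_mult_self)
  show "0 < real CARD('d) + (\<Sum>i\<in>UNIV. \<Sum>k\<in>UNIV. (cmod (Z $ k $ i))\<^sup>2)"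
    by (intro add_pos_nonneg sum_nonneg) auto
qed

theorem mainTheorem2:
  fixes Z :: "complex^'d^'d"
  assumes "\<not> normal_mat Z"
  shows "psd (Qmat Z) \<and> entangled (normalize_state (Qmat Z))"
proof -
  obtain r where trace: "trace (Qmat Z) = of_real r" and r: "0 < r"
    using trace_Qmat_positive .
  from trace have normalize: "normalize_state (Qmat Z) = (1 / r) *\<^sub>R Qmat Z"
    by (rule normalize_state_eq_scaleR)
  obtain v where v: "Re (cinner v ((adj Z ** Z - Z ** adj Z) *v v)) < 0"
    using not_normal_imp_commutator_negative[OF assms] .
  define x :: "complex^('d \<times> bool)"
    where "x = (\<chi> p. if snd p then v $ fst p else - (adj Z *v v) $ fst p)"
  have "Re (quad_form (partial_transpose (normalize_state (Qmat Z))) x) < 0"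
    using v r by (simp add: normalize partial_transpose_scaleR quad_form_scaleR x_def
        quad_form_partial_transpose_Qmat divide_neg_pos)
  moreover have "psd (normalize_state (Qmat Z))"
    using r by (simp add: normalize psd_scaleR psd_Qmat)
  ultimately show ?thesis
    using psd_Qmat entangled_if_partial_transpose_negative by blast
qed

end
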